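(* Let $p\ge5$ be a prime and let $\alpha=\frac{P+\sqrt D}{Q}\in\mathbb{Q}_p$, where $P,Q\in\mathbb{Z}$, $Q\ne0$, $D$ is a non-square integer with $\sqrt D\in\mathbb{Q}_p$, and $Q\mid D-P^2$. Let $N=\lceil\log_2 p\rceil$. Define sequences by $P_0=P$, $Q_0=Q$, $\alpha_n=\frac{P_n+\sqrt D}{Q_n}$, $b_n=\bar s(\alpha_n)$ if $N\mid n$ and $b_n=\bar t(\alpha_n)$ otherwise (i.e. $b_{Nk}=\bar s(\alpha_{Nk})$ and $b_{Nk+j}=\bar t(\alpha_{Nk+j})$ for $1\le j\le N-1$), and $P_{n+1}=b_nQ_n-P_n$, $Q_{n+1}=\frac{D-P_{n+1}^2}{Q_n}$ (so that $\alpha_{n+1}=\frac{1}{\alpha_n-b_n}$), and assume all $b_n$ are nonzero. Let $M=\max\left\{|Q|,\ \frac{p^2}{4}|D|+1,\ \frac{4(p^2+1)}{3}\right\}$. Then $|Q_n|\le\frac{p^2}{4}M+1$ for all $n\ge0$.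
   Context: Let $\mathcal{R}=\{-\frac{p-1}{2},\dots,0,\dots,\frac{p-1}{2}\}$. Every nonzero $\beta\in\mathbb{Q}_p$ is written uniquely as $\beta=\sum_{n\ge r}a_np^n$ with $r=v_p(\beta)$, $a_n\in\mathcal{R}$, $a_r\ne0$. Put $s(\beta)=\sum_{n=r}^{0}a_np^n$, $t(\beta)=\sum_{n=r}^{-1}a_np^n$ (empty sums are $0$). With $\operatorname{round}(x)$ the integer nearest to the real $x$, for $\beta=\frac{P'+\sqrt D}{Q'}$ ($P',Q'\in\mathbb{Q}$, $Q'\ne0$) define $\bar s(\beta)=\operatorname{round}\!\left(\frac{P'/Q'-s(\beta)}{p}\right)p+s(\beta)$ and $\bar t(\beta)=\operatorname{round}\!\left(P'/Q'-t(\beta)\right)+t(\beta)$. Absolute values $|\cdot|$ are the usual real ones. *)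

theory Defs
  imports Complex_Main "HOL-Computational_Algebra.Primes"
begin

text \<open>q lies in p^m Z_(p) (rationals with p-adic valuation at least m, or zero).\<close>
definition in_pZ :: "nat \<Rightarrow> int \<Rightarrow> rat \<Rightarrow> bool" where
  "in_pZ p m q \<longleftrightarrow> (\<exists>a b::int. b \<noteq> 0 \<and> \<not> int p dvd b \<and>
      q = of_int a / of_int b * (of_nat p) powi m)"

text \<open>r is a p-adic Cauchy sequence of rationals converging to a square root of D in Q_p;
  its limit plays the role of sqrt D.\<close>
definition is_padic_sqrt_seq :: "nat \<Rightarrow> int \<Rightarrow> (nat \<Rightarrow> rat) \<Rightarrow> bool" where
  "is_padic_sqrt_seq p D r \<longleftrightarrow>
     (\<forall>n. in_pZ p (int n) (r (Suc n) - r n) \<and> in_pZ p (int n) ((r n)^2 - of_int D))"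

text \<open>(P' + sqrt D)/Q' - x lies in p^m Z_p, where sqrt D = lim r.\<close>
definition padic_cong :: "nat \<Rightarrow> (nat \<Rightarrow> rat) \<Rightarrow> rat \<Rightarrow> rat \<Rightarrow> rat \<Rightarrow> int \<Rightarrow> bool" where
  "padic_cong p r P' Q' x m \<longleftrightarrow>
     (\<exists>n0. \<forall>n\<ge>n0. in_pZ p m ((P' + r n) / Q' - x))"

definition dig_upto0 :: "nat \<Rightarrow> rat \<Rightarrow> bool" where
  "dig_upto0 p x \<longleftrightarrow> (\<exists>k (a::nat \<Rightarrow> int). (\<forall>i\<le>k. 2 * \<bar>a i\<bar> \<le> int p - 1) \<and>
      x = (\<Sum>i\<le>k. of_int (a i) / (of_nat p) ^ i))"

definition dig_below0 :: "nat \<Rightarrow> rat \<Rightarrow> bool" where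
  "dig_below0 p x \<longleftrightarrow> (\<exists>k (a::nat \<Rightarrow> int). (\<forall>i\<in>{1..k}. 2 * \<bar>a i\<bar> \<le> int p - 1) \<and>
      x = (\<Sum>i\<in>{1..k}. of_int (a i) / (of_nat p) ^ i))"

text \<open>s(beta) and t(beta) for beta = (P' + sqrt D)/Q': the truncations of the balanced
  p-adic expansion, i.e. the unique balanced-digit sums with beta - s in pZ_p, beta - t in Z_p.\<close>
definition s_fun :: "nat \<Rightarrow> (nat \<Rightarrow> rat) \<Rightarrow> rat \<Rightarrow> rat \<Rightarrow> rat" where
  "s_fun p r P' Q' = (THE x. dig_upto0 p x \<and> padic_cong p r P' Q' x 1)"

definition t_fun :: "nat \<Rightarrow> (nat \<Rightarrow> rat) \<Rightarrow> rat \<Rightarrow> rat \<Rightarrow> rat" where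
  "t_fun p r P' Q' = (THE x. dig_below0 p x \<and> padic_cong p r P' Q' x 0)"

definition sbar :: "nat \<Rightarrow> (nat \<Rightarrow> rat) \<Rightarrow> rat \<Rightarrow> rat \<Rightarrow> rat" where
  "sbar p r P' Q' = (let s = s_fun p r P' Q' in
      of_int (round ((P' / Q' - s) / of_nat p)) * of_nat p + s)"

definition tbar :: "nat \<Rightarrow> (nat \<Rightarrow> rat) \<Rightarrow> rat \<Rightarrow> rat \<Rightarrow> rat" where
  "tbar p r P' Q' = (let t = t_fun p r P' Q' in
      of_int (round (P' / Q' - t)) + t)"

end

(* Integrality: the digit choice makes b_n an element of Z[1/p] with alpha_n - b_n a p-adic
   integer.  Hence b_n Q_n and Q_(n+1) = (D - P_(n+1)^2) / Q_n are both p-integral and in Z[1/p],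
   i.e. integers, and Q_(n+1) <> 0 because D is not a square.  So |Q_n| >= 1 for all n.

   Size: |b_n - P_n/Q_n| is at most p/2 at the steps N | n and at most 1/2 otherwise, so
   |Q_(n+1)| <= |D|/|Q_n| + c^2 |Q_n| with c^2 = p^2/4 resp. 1/4.  By convexity of
   x |-> |D|/x + c^2 x on [1, M], a step N | n starting below M lands below p^2 M/4 + |D|/M; each of
   the following N - 1 steps either stays below M or divides by 4 up to an additive |D|/M, and
   4^N >= (p + 1)^2 brings the bound back below M before the next multiple of N. *)

theory Submission
  imports Defs
begin

section \<open>\<open>p\<close>-integral rationals\<close>

lemma in_pZI:
  "b \<noteq> 0 \<Longrightarrow> \<not> int p dvd b \<Longrightarrow> q = of_int a / of_int b * of_nat p powi m \<Longrightarrow>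
    in_pZ p m q"
  unfolding in_pZ_def by blast

lemma in_pZE:
  assumes "in_pZ p m q"
  obtains a b :: int where "b \<noteq> 0" "\<not> int p dvd b" "q = of_int a / of_int b * of_nat p powi m"
  using assms unfolding in_pZ_def by blast

lemma in_pZ_of_int: "prime p \<Longrightarrow> in_pZ p 0 (of_int a)"
  using in_pZI[of 1 p "of_int a" a 0] prime_gt_1_nat[of p] by simp

lemma in_pZ_zero: "prime p \<Longrightarrow> in_pZ p m 0"
  using in_pZI[of 1 p 0 0 m] prime_gt_1_nat[of p] by simp

lemma in_pZ_add:
  assumes "prime p" "in_pZ p m x" "in_pZ p m y"
  shows "in_pZ p m (x + y)"
proof -
  obtain a b where ab: "b \<noteq> 0" "\<not> int p dvd b" "x = of_int a / of_int b * of_nat p powi m"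
    using assms(2) by (rule in_pZE)
  obtain c d where cd: "d \<noteq> 0" "\<not> int p dvd d" "y = of_int c / of_int d * of_nat p powi m"
    using assms(3) by (rule in_pZE)
  have "\<not> int p dvd b * d"
    using ab cd assms(1) by (simp add: prime_dvd_mult_iff)
  moreover have "x + y = of_int (a * d + c * b) / of_int (b * d) * of_nat p powi m"
    using ab cd by (simp add: field_simps)
  ultimately show ?thesis
    using ab cd by (intro in_pZI[of "b * d" _ _ "a * d + c * b"]) auto
qed

lemma in_pZ_uminus: "in_pZ p m x \<Longrightarrow> in_pZ p m (- x)"
  by (erule in_pZE, rule_tac a = "- a" in in_pZI) auto

lemma in_pZ_diff:
  "prime p \<Longrightarrow> in_pZ p m x \<Longrightarrow> in_pZ p m y \<Longrightarrow> in_pZ p m (x - y)"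
  using in_pZ_add[of p m x "- y"] in_pZ_uminus[of p m y] by simp

lemma in_pZ_mult:
  assumes "prime p" "in_pZ p m x" "in_pZ p n y"
  shows "in_pZ p (m + n) (x * y)"
proof -
  obtain a b where ab: "b \<noteq> 0" "\<not> int p dvd b" "x = of_int a / of_int b * of_nat p powi m"
    using assms(2) by (rule in_pZE)
  obtain c d where cd: "d \<noteq> 0" "\<not> int p dvd d" "y = of_int c / of_int d * of_nat p powi n"
    using assms(3) by (rule in_pZE)
  have "\<not> int p dvd b * d"
    using ab cd assms(1) by (simp add: prime_dvd_mult_iff)
  moreover have "x * y = of_int (a * c) / of_int (b * d) * of_nat p powi (m + n)"
    using ab cd prime_gt_0_nat[OF assms(1)] by (simp add: field_simps power_int_add)
  ultimately show ?thesis
    using ab cd by (intro in_pZI[of "b * d" _ _ "a * c"]) auto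
qed

lemma in_pZ_mono:
  assumes "prime p" "in_pZ p m x" "k \<le> m"
  shows "in_pZ p k x"
proof -
  obtain a b where ab: "b \<noteq> 0" "\<not> int p dvd b" "x = of_int a / of_int b * of_nat p powi m"
    using assms(2) by (rule in_pZE)
  have "(of_nat p :: rat) powi m = of_nat p ^ nat (m - k) * of_nat p powi k"
    using assms prime_gt_0_nat[OF assms(1)]
    by (simp flip: power_int_add add: power_int_nonneg_exp [symmetric])
  then show ?thesis
    using ab by (intro in_pZI[of b _ _ "a * int p ^ nat (m - k)"]) auto
qed

lemma in_pZ_divide:
  assumes "prime p" "in_pZ p (m + int v) z" "\<not> int p dvd u" "u \<noteq> 0"
  shows "in_pZ p m (z / of_int (int p ^ v * u))"
proof -
  obtain a b where ab: "b \<noteq> 0" "\<not> int p dvd b" "z = of_int a / of_int b * of_nat p powi (m + int v)"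
    using assms(2) by (rule in_pZE)
  have "\<not> int p dvd b * u"
    using ab assms by (simp add: prime_dvd_mult_iff)
  moreover have "z / of_int (int p ^ v * u) = of_int a / of_int (b * u) * of_nat p powi m"
    using ab assms prime_gt_0_nat[of p] by (simp add: field_simps power_int_add)
  ultimately show ?thesis
    using ab assms by (intro in_pZI[of "b * u" _ _ a]) auto
qed

lemma in_pZ_imp_dvd:
  assumes "prime p" "in_pZ p (int j) (of_int C / of_nat p ^ K)"
  shows "int p ^ (K + j) dvd C"
proof -
  obtain a b where ab: "b \<noteq> 0" "\<not> int p dvd b"
    "of_int C / of_nat p ^ K = (of_int a / of_int b * of_nat p ^ j :: rat)"
    using assms(2) unfolding in_pZ_def power_int_of_nat by blast
  have "(of_int (C * b) :: rat) = of_int (a * int p ^ (K + j))"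
    using ab(1,3) prime_gt_0_nat[OF assms(1)] by (simp add: field_simps power_add)
  then have "int p ^ (K + j) dvd C * b"
    by (simp only: of_int_eq_iff) simp
  moreover have "coprime (int p ^ (K + j)) b"
    using prime_imp_coprime[of "int p" b] assms(1) ab(2) by simp
  ultimately show ?thesis
    using coprime_dvd_mult_left_iff by blast
qed

lemma in_pZ_power2_imp:
  assumes "prime p" "in_pZ p 0 (q\<^sup>2)"
  shows "in_pZ p 0 q"
proof -
  obtain e w where ew: "quotient_of q = (e, w)" by (cases "quotient_of q") auto
  have q: "q = of_int e / of_int w" and w: "w > 0" and cop: "coprime e w"
    using ew quotient_of_div quotient_of_denom_pos quotient_of_coprime by auto
  obtain a b where ab: "b \<noteq> 0" "\<not> int p dvd b" "q\<^sup>2 = of_int a / of_int b"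
    using assms(2) unfolding in_pZ_def power_int_0_right mult_1_right by blast
  have pr: "prime (int p)" using assms(1) by simp
  have "(of_int e)\<^sup>2 / (of_int w)\<^sup>2 = (of_int a / of_int b :: rat)"
    using ab(3) by (simp add: q power_divide)
  then have "(of_int (e\<^sup>2 * b) :: rat) = of_int (a * w\<^sup>2)"
    using ab(1) w by (simp add: frac_eq_eq)
  then have eq: "e\<^sup>2 * b = a * w\<^sup>2" by (simp only: of_int_eq_iff)
  have "\<not> int p dvd w"
  proof
    assume pw: "int p dvd w"
    then have "int p dvd e\<^sup>2 * b" using eq by (simp add: power2_eq_square)
    then have "int p dvd e" using pr ab(2) prime_dvd_mult_iff prime_dvd_power by blast
    with pw cop pr show False using coprime_common_divisor not_prime_unit by blast
  qed
  then show ?thesis using in_pZI[of w p q e 0] w q by simp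
qed

lemma int_times_prime_power_factor:
  assumes "prime p" "(w::int) \<noteq> 0"
  obtains v u where "w = int p ^ v * u" "\<not> int p dvd u" "u \<noteq> 0"
proof -
  have "\<not> is_unit (int p)" using prime_gt_1_nat[OF assms(1)] by simp
  then show ?thesis
    using that multiplicity_decompose[OF assms(2)] multiplicity_dvd[of "int p" w] assms(2)
    by (metis dvd_div_mult_self mult.commute mult_not_zero)
qed

definition p_fraction :: "nat \<Rightarrow> rat \<Rightarrow> bool" where
  "p_fraction p x \<longleftrightarrow> (\<exists>k. x * of_nat p ^ k \<in> \<int>)"

lemma p_fraction_Ints: "x \<in> \<int> \<Longrightarrow> p_fraction p x"
  unfolding p_fraction_def by (intro exI[of _ 0]) simp

lemma p_fraction_add:
  assumes "p_fraction p x" "p_fraction p y"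
  shows "p_fraction p (x + y)"
proof -
  obtain k l where "x * of_nat p ^ k \<in> \<int>" "y * of_nat p ^ l \<in> \<int>"
    using assms unfolding p_fraction_def by blast
  moreover have "(of_nat p :: rat) ^ j \<in> \<int>" for j by simp
  ultimately have "(x * of_nat p ^ k) * of_nat p ^ l + (y * of_nat p ^ l) * of_nat p ^ k \<in> \<int>"
    by (blast intro: Ints_add Ints_mult)
  then show ?thesis
    unfolding p_fraction_def by (intro exI[of _ "k + l"]) (simp add: algebra_simps power_add)
qed

lemma p_fraction_mult:
  assumes "p_fraction p x" "p_fraction p y"
  shows "p_fraction p (x * y)"
proof -
  obtain k l where "x * of_nat p ^ k \<in> \<int>" "y * of_nat p ^ l \<in> \<int>"
    using assms unfolding p_fraction_def by blast
  then have "(x * of_nat p ^ k) * (y * of_nat p ^ l) \<in> \<int>" by (rule Ints_mult)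
  then show ?thesis
    unfolding p_fraction_def by (intro exI[of _ "k + l"]) (simp add: algebra_simps power_add)
qed

lemma p_fraction_diff:
  "p_fraction p x \<Longrightarrow> p_fraction p y \<Longrightarrow> p_fraction p (x - y)"
  using p_fraction_add[of p x "- y"] p_fraction_mult[of p "- 1" y] p_fraction_Ints[of "- 1" p]
  by simp

lemma p_fraction_in_pZ_imp_Ints:
  assumes "prime p" "in_pZ p 0 x" "p_fraction p x"
  shows "x \<in> \<int>"
proof -
  obtain k C where C: "x * of_nat p ^ k = of_int C"
    using assms(3) unfolding p_fraction_def by (auto elim: Ints_cases)
  have p0: "(of_nat p :: rat) \<noteq> 0" using prime_gt_0_nat[OF assms(1)] by simp
  have xC: "x = of_int C / of_nat p ^ k" using C p0 by (simp add: field_simps)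
  have "int p ^ (k + 0) dvd C" using in_pZ_imp_dvd[OF assms(1), of 0 C k] assms(2) xC by simp
  then obtain z where "C = int p ^ k * z" by auto
  then show ?thesis using xC p0 by simp
qed

section \<open>Balanced digit expansions\<close>

definition digit_sum :: "nat \<Rightarrow> (nat \<Rightarrow> int) \<Rightarrow> nat \<Rightarrow> rat" where
  "digit_sum p c K = (\<Sum>i\<le>K. of_int (c i) / of_nat p ^ i)"

lemma balanced_residue:
  assumes "odd p"
  obtains d :: int where "2 * \<bar>d\<bar> \<le> int p - 1" "int p dvd A - d"
proof -
  define h where "h = (int p - 1) div 2"
  have p: "int p = 2 * h + 1"
    using assms unfolding h_def by presburger
  define d where "d = (A + h) mod int p - h"
  have "0 < int p" using odd_pos[OF assms] by simp
  then have "0 \<le> (A + h) mod int p" "(A + h) mod int p < int p"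
    by (rule pos_mod_sign, rule pos_mod_bound)
  then have "2 * \<bar>d\<bar> \<le> int p - 1"
    unfolding d_def using p by (simp add: abs_le_iff)
  moreover have "int p dvd A - d"
  proof -
    have "A - d = (A + h) - (A + h) mod int p" unfolding d_def by simp
    then show ?thesis by (simp add: minus_mod_eq_mult_div)
  qed
  ultimately show ?thesis by (rule that)
qed

lemma digit_sum_Suc:
  "digit_sum p c (Suc k) = digit_sum p c k + of_int (c (Suc k)) / of_nat p ^ Suc k"
  by (simp add: digit_sum_def)

lemma digit_sum_cong:
  "(\<And>i. i \<le> k \<Longrightarrow> c i = c' i) \<Longrightarrow> digit_sum p c k = digit_sum p c' k"
  unfolding digit_sum_def by (intro sum.cong) auto

lemma balanced_digits_approx_int:
  assumes "prime p" "odd p"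
  shows "\<exists>a. (\<forall>i\<le>k. 2 * \<bar>a i\<bar> \<le> int p - 1) \<and>
           in_pZ p 1 (of_int A / of_nat p ^ k - digit_sum p a k)"
proof (induction k arbitrary: A)
  case 0
  obtain d where d: "2 * \<bar>d\<bar> \<le> int p - 1" "int p dvd A - d"
    using balanced_residue[OF assms(2)] .
  then obtain c where "A - d = int p * c" by (elim dvdE)
  then have "in_pZ p 1 (of_int A / of_nat p ^ 0 - digit_sum p (\<lambda>_. d) 0)"
    using prime_gt_1_nat[OF assms(1)]
    by (intro in_pZI[of 1 _ _ c])
      (auto simp: digit_sum_def of_int_diff [symmetric] simp del: of_int_diff)
  with d show ?case by auto
next
  case (Suc k)
  obtain d where d: "2 * \<bar>d\<bar> \<le> int p - 1" "int p dvd A - d"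
    using balanced_residue[OF assms(2)] .
  then obtain A' where "A - d = int p * A'" by (elim dvdE)
  then have A': "A = d + int p * A'" by simp
  obtain a where a: "\<forall>i\<le>k. 2 * \<bar>a i\<bar> \<le> int p - 1"
    "in_pZ p 1 (of_int A' / of_nat p ^ k - digit_sum p a k)"
    using Suc.IH by blast
  define a' where "a' = a(Suc k := d)"
  have "digit_sum p a' k = digit_sum p a k"
    unfolding a'_def by (rule digit_sum_cong) simp
  then have "digit_sum p a' (Suc k) = digit_sum p a k + of_int d / of_nat p ^ Suc k"
    by (simp add: digit_sum_Suc a'_def)
  moreover have "of_int A / (of_nat p :: rat) ^ Suc k
      = of_int A' / of_nat p ^ k + of_int d / of_nat p ^ Suc k"
    using prime_gt_0_nat[OF assms(1)] by (simp add: A' field_simps)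
  ultimately have "of_int A / of_nat p ^ Suc k - digit_sum p a' (Suc k)
      = of_int A' / of_nat p ^ k - digit_sum p a k"
    by simp
  moreover have "\<forall>i\<le>Suc k. 2 * \<bar>a' i\<bar> \<le> int p - 1"
    using a(1) d(1) unfolding a'_def by (auto simp: le_Suc_eq)
  ultimately show ?case
    using a(2) by (intro exI[of _ a']) simp
qed

lemma dig_upto0_digit_sum:
  "(\<forall>i\<le>k. 2 * \<bar>a i\<bar> \<le> int p - 1) \<Longrightarrow> dig_upto0 p (digit_sum p a k)"
  unfolding dig_upto0_def digit_sum_def by blast

lemma dig_upto0_approx:
  assumes "prime p" "odd p"
  obtains x where "dig_upto0 p x" "in_pZ p 1 (y - x)"
proof -
  obtain e w where "quotient_of y = (e, w)" by fastforce
  then have y: "y = of_int e / of_int w" and w: "w > 0"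
    by (simp_all add: quotient_of_div quotient_of_denom_pos)
  obtain v u where vu: "w = int p ^ v * u" "\<not> int p dvd u" "u \<noteq> 0"
    using int_times_prime_power_factor[OF assms(1), of w] w by auto
  have "coprime u (int p ^ Suc v)"
    using prime_imp_coprime[of "int p" u] assms(1) vu(2) by (simp add: coprime_commute)
  then obtain s t where st: "s * u + t * int p ^ Suc v = 1"
    using bezout_int[of u "int p ^ Suc v"] by auto
  \<comment> \<open>\<open>e s\<close> is an inverse of \<open>u\<close> modulo \<open>p ^ Suc v\<close>, so \<open>y\<close> is close to \<open>e s / p ^ v\<close>\<close>
  obtain a where a: "\<forall>i\<le>v. 2 * \<bar>a i\<bar> \<le> int p - 1"
    "in_pZ p 1 (of_int (e * s) / of_nat p ^ v - digit_sum p a v)"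
    using balanced_digits_approx_int[OF assms] by blast
  have p0: "(of_nat p :: rat) \<noteq> 0" using prime_gt_0_nat[OF assms(1)] by simp
  have "e - e * s * u = e * (s * u + t * int p ^ Suc v) - e * s * u"
    using st by simp
  also have "\<dots> = e * t * int p ^ Suc v"
    by (simp add: algebra_simps)
  finally have ee: "e - e * s * u = e * t * int p ^ Suc v" .
  have "y - of_int (e * s) / of_nat p ^ v = of_int (e - e * s * u) / (of_int u * of_nat p ^ v)"
    using vu(3) p0 by (simp add: y vu(1) field_simps)
  also have "\<dots> = of_int (e * t) / of_int u * of_nat p powi 1"
    using vu(3) p0 by (simp only: ee) (simp add: field_simps)
  finally have "y - of_int (e * s) / of_nat p ^ v = of_int (e * t) / of_int u * of_nat p powi 1" .
  then have "in_pZ p 1 (y - of_int (e * s) / of_nat p ^ v)"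
    using vu by (intro in_pZI[of u _ _ "e * t"]) auto
  from in_pZ_add[OF assms(1) this a(2)]
  have "in_pZ p 1 (y - digit_sum p a v)" by simp
  with a(1) show ?thesis by (blast intro: that dig_upto0_digit_sum)
qed

lemma dig_below0_approx:
  assumes "prime p" "odd p"
  obtains x where "dig_below0 p x" "in_pZ p 0 (y - x)"
proof -
  obtain x where x: "dig_upto0 p x" "in_pZ p 1 (y - x)"
    using dig_upto0_approx[OF assms] .
  then obtain k a where a: "\<forall>i\<le>k. 2 * \<bar>a i\<bar> \<le> int p - 1"
    "x = of_int (a 0) + (\<Sum>i\<in>{1..k}. of_int (a i) / of_nat p ^ i)"
    unfolding dig_upto0_def by (auto simp: atMost_atLeast0 sum.atLeast_Suc_atMost)
  have "in_pZ p 0 (y - x)" using in_pZ_mono[OF assms(1) x(2)] by simp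
  from in_pZ_add[OF assms(1) this in_pZ_of_int[OF assms(1), of "a 0"]]
  have "in_pZ p 0 (y - (\<Sum>i\<in>{1..k}. of_int (a i) / of_nat p ^ i))"
    by (simp add: a(2))
  moreover have "dig_below0 p (\<Sum>i\<in>{1..k}. of_int (a i) / of_nat p ^ i)"
    unfolding dig_below0_def using a(1) by (intro exI[of _ k] exI[of _ a]) auto
  ultimately show ?thesis by (rule that[rotated])
qed

lemma p_fraction_digit_sum:
  assumes "0 < p"
  shows "p_fraction p (digit_sum p c K)"
proof -
  have "of_int (c i) / (of_nat p :: rat) ^ i * of_nat p ^ K = of_int (c i * int p ^ (K - i))"
    if "i \<le> K" for i
  proof -
    have "(of_nat p :: rat) ^ K = of_nat p ^ i * of_nat p ^ (K - i)"
      using that by (simp flip: power_add)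
    then show ?thesis using assms by simp
  qed
  then have "digit_sum p c K * of_nat p ^ K \<in> \<int>"
    unfolding digit_sum_def sum_distrib_right by (intro Ints_sum) (metis Ints_of_int atMost_iff)
  then show ?thesis
    unfolding p_fraction_def by blast
qed

lemma p_fraction_in_pZ_abs_less_imp_zero:
  assumes "prime p" "p_fraction p S" "in_pZ p (int j) S" "\<bar>S\<bar> < of_nat p ^ j"
  shows "S = 0"
proof -
  obtain k C where C: "S * of_nat p ^ k = of_int C"
    using assms(2) unfolding p_fraction_def by (auto elim: Ints_cases)
  have p0: "(of_nat p :: rat) > 0" using prime_gt_0_nat[OF assms(1)] by simp
  have SC: "S = of_int C / of_nat p ^ k" using C p0 by (simp add: field_simps)
  have "int p ^ (k + j) dvd C"
    using in_pZ_imp_dvd[OF assms(1)] assms(3) SC by simp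
  then obtain z where "C = int p ^ (k + j) * z" by (elim dvdE)
  then have Sz: "S = of_int z * of_nat p ^ j" using p0 by (simp add: SC power_add)
  then have "\<bar>of_int z\<bar> * (of_nat p :: rat) ^ j < 1 * of_nat p ^ j"
    using assms(4) by (simp add: abs_mult)
  then have "\<bar>of_int z :: rat\<bar> < 1"
    using p0 by (simp only: mult_less_cancel_right zero_less_power) simp
  then have "z = 0" by linarith
  then show ?thesis using Sz by simp
qed

lemma digit_sum_abs_less:
  assumes "1 < p" "\<forall>i\<le>K. \<bar>c i\<bar> \<le> int p - 1"
  shows "\<bar>digit_sum p c K\<bar> < of_nat p"
proof -
  define x where "x = 1 / (of_nat p :: rat)"
  have p: "(of_nat p :: rat) > 1" using assms(1) by simp
  have "\<bar>digit_sum p c K\<bar> \<le> (\<Sum>i\<le>K. \<bar>of_int (c i) / (of_nat p :: rat) ^ i\<bar>)"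
    unfolding digit_sum_def by (rule sum_abs)
  also have "\<dots> \<le> (\<Sum>i\<le>K. (of_nat p - 1) * x ^ i)"
  proof (rule sum_mono)
    fix i assume "i \<in> {..K}"
    then have "(of_int \<bar>c i\<bar> :: rat) \<le> of_nat p - 1"
      using assms(2) by (metis atMost_iff of_int_1 of_int_diff of_int_le_iff of_int_of_nat_eq)
    then show "\<bar>of_int (c i) / (of_nat p :: rat) ^ i\<bar> \<le> (of_nat p - 1) * x ^ i"
      using p by (simp add: x_def abs_div divide_right_mono power_one_over)
  qed
  also have "\<dots> = of_nat p * ((1 - x) * (\<Sum>i\<le>K. x ^ i))"
  proof -
    have "of_nat p - 1 = of_nat p * (1 - x)" using p by (simp add: x_def field_simps)
    then show ?thesis by (simp add: sum_distrib_left mult.assoc)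
  qed
  also have "\<dots> = of_nat p * (1 - x ^ Suc K)"
    by (simp only: sum_gp_basic)
  also have "\<dots> < of_nat p"
    using p by (simp add: x_def)
  finally show ?thesis .
qed

lemma digit_sum_abs_less_1:
  assumes "1 < p" "\<forall>i\<le>K. \<bar>c i\<bar> \<le> int p - 1" "c 0 = 0"
  shows "\<bar>digit_sum p c K\<bar> < 1"
proof (cases K)
  case 0
  then show ?thesis using assms(3) by (simp add: digit_sum_def)
next
  case (Suc L)
  have "digit_sum p c K = digit_sum p (\<lambda>i. c (Suc i)) L / of_nat p"
    unfolding Suc digit_sum_def sum.atMost_Suc_shift using assms(3)
    by (simp add: sum_divide_distrib ac_simps)
  moreover have "\<bar>digit_sum p (\<lambda>i. c (Suc i)) L\<bar> < of_nat p"
    using assms(1,2) Suc by (intro digit_sum_abs_less) auto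
  ultimately show ?thesis
    using assms(1) by (simp add: abs_div)
qed

lemma digit_sum_diff:
  "digit_sum p c K - digit_sum p c' K = digit_sum p (\<lambda>i. c i - c' i) K"
  by (simp add: digit_sum_def sum_subtractf [symmetric] diff_divide_distrib)

lemma digit_sum_eq_if_zero_above:
  assumes "\<forall>i>K. c i = 0" "K \<le> L"
  shows "digit_sum p c L = digit_sum p c K"
  unfolding digit_sum_def using assms
  by (intro sum.mono_neutral_right) auto

lemma balanced_digit_sum_diff:
  assumes "\<forall>i. 2 * \<bar>c i\<bar> \<le> int p - 1" "\<forall>i. 2 * \<bar>c' i\<bar> \<le> int p - 1"
    and "\<forall>i>K. c i = 0" "\<forall>i>K'. c' i = 0"
  obtains L where "digit_sum p c K - digit_sum p c' K' = digit_sum p (\<lambda>i. c i - c' i) L"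
    "\<forall>i. \<bar>c i - c' i\<bar> \<le> int p - 1"
proof
  show "digit_sum p c K - digit_sum p c' K' = digit_sum p (\<lambda>i. c i - c' i) (max K K')"
    using digit_sum_eq_if_zero_above[OF assms(3), where L = "max K K'" and p = p]
      digit_sum_eq_if_zero_above[OF assms(4), where L = "max K K'" and p = p]
    by (simp add: digit_sum_diff [symmetric])
  show "\<forall>i. \<bar>c i - c' i\<bar> \<le> int p - 1"
  proof
    fix i
    show "\<bar>c i - c' i\<bar> \<le> int p - 1"
      using assms(1,2)[rule_format, of i] by arith
  qed
qed

lemma dig_upto0_obtain_digits:
  assumes "0 < p" "dig_upto0 p x"
  obtains c K where "\<forall>i. 2 * \<bar>c i\<bar> \<le> int p - 1" "\<forall>i>K. c i = 0" "x = digit_sum p c K"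
proof -
  obtain K a where a: "\<forall>i\<le>K. 2 * \<bar>a i\<bar> \<le> int p - 1" "x = (\<Sum>i\<le>K. of_int (a i) / of_nat p ^ i)"
    using assms(2) unfolding dig_upto0_def by blast
  define c where "c i = (if i \<le> K then a i else 0)" for i
  have "x = digit_sum p c K"
    unfolding a(2) digit_sum_def c_def by simp
  then show ?thesis
    using that[of c K] a(1) assms(1) unfolding c_def by auto
qed

lemma dig_below0_obtain_digits:
  assumes "0 < p" "dig_below0 p x"
  obtains c K where "\<forall>i. 2 * \<bar>c i\<bar> \<le> int p - 1" "c 0 = 0" "\<forall>i>K. c i = 0" "x = digit_sum p c K"
proof -
  obtain K a where a: "\<forall>i\<in>{1..K}. 2 * \<bar>a i\<bar> \<le> int p - 1"
    "x = (\<Sum>i\<in>{1..K}. of_int (a i) / of_nat p ^ i)"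
    using assms(2) unfolding dig_below0_def by blast
  define c where "c i = (if 1 \<le> i \<and> i \<le> K then a i else 0)" for i
  have "x = digit_sum p c K"
    unfolding a(2) digit_sum_def c_def
    by (simp add: atMost_atLeast0 sum.atLeast_Suc_atMost)
  then show ?thesis
    using that[of c K] a(1) assms(1) unfolding c_def by auto
qed

lemma dig_upto0_unique:
  assumes "prime p" "dig_upto0 p x" "dig_upto0 p x'" "in_pZ p 1 (x - x')"
  shows "x = x'"
proof -
  have p: "1 < p" using prime_gt_1_nat[OF assms(1)] .
  obtain c K where c: "\<forall>i. 2 * \<bar>c i\<bar> \<le> int p - 1" "\<forall>i>K. c i = 0" "x = digit_sum p c K"
    using dig_upto0_obtain_digits[OF _ assms(2)] p by auto
  obtain c' K' where c': "\<forall>i. 2 * \<bar>c' i\<bar> \<le> int p - 1" "\<forall>i>K'. c' i = 0" "x' = digit_sum p c' K'"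
    using dig_upto0_obtain_digits[OF _ assms(3)] p by auto
  obtain L where diff: "x - x' = digit_sum p (\<lambda>i. c i - c' i) L"
    and digits: "\<forall>i. \<bar>c i - c' i\<bar> \<le> int p - 1"
    using balanced_digit_sum_diff[OF c(1) c'(1) c(2) c'(2)] unfolding c(3) c'(3) by blast
  have "\<bar>x - x'\<bar> < of_nat p ^ 1"
    unfolding diff power_one_right using p digits by (intro digit_sum_abs_less) auto
  moreover have "p_fraction p (x - x')"
    unfolding diff using p by (intro p_fraction_digit_sum) simp
  ultimately have "x - x' = 0"
    using p_fraction_in_pZ_abs_less_imp_zero[of p "x - x'" 1] assms(1,4) by simp
  then show ?thesis by simp
qed

lemma dig_below0_unique:
  assumes "prime p" "dig_below0 p x" "dig_below0 p x'" "in_pZ p 0 (x - x')"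
  shows "x = x'"
proof -
  have p: "1 < p" using prime_gt_1_nat[OF assms(1)] .
  obtain c K where c: "\<forall>i. 2 * \<bar>c i\<bar> \<le> int p - 1" "c 0 = 0" "\<forall>i>K. c i = 0"
    "x = digit_sum p c K"
    using dig_below0_obtain_digits[OF _ assms(2)] p by auto
  obtain c' K' where c': "\<forall>i. 2 * \<bar>c' i\<bar> \<le> int p - 1" "c' 0 = 0" "\<forall>i>K'. c' i = 0"
    "x' = digit_sum p c' K'"
    using dig_below0_obtain_digits[OF _ assms(3)] p by auto
  obtain L where diff: "x - x' = digit_sum p (\<lambda>i. c i - c' i) L"
    and digits: "\<forall>i. \<bar>c i - c' i\<bar> \<le> int p - 1"
    using balanced_digit_sum_diff[OF c(1) c'(1) c(3) c'(3)] unfolding c(4) c'(4) by blast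
  have "\<bar>x - x'\<bar> < of_nat p ^ 0"
    unfolding diff power_0 using p digits c(2) c'(2) by (intro digit_sum_abs_less_1) auto
  moreover have "p_fraction p (x - x')"
    unfolding diff using p by (intro p_fraction_digit_sum) simp
  ultimately have "x - x' = 0"
    using p_fraction_in_pZ_abs_less_imp_zero[of p "x - x'" 0] assms(1,4) by simp
  then show ?thesis by simp
qed

lemma p_fraction_dig_upto0:
  assumes "0 < p" "dig_upto0 p x"
  shows "p_fraction p x"
  using assms(2) by (rule dig_upto0_obtain_digits[OF assms(1)]) (simp add: p_fraction_digit_sum[OF assms(1)])

lemma p_fraction_dig_below0:
  assumes "0 < p" "dig_below0 p x"
  shows "p_fraction p x"
  using assms(2) by (rule dig_below0_obtain_digits[OF assms(1)]) (simp add: p_fraction_digit_sum[OF assms(1)])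

section \<open>Integrality of the expansion\<close>

lemma in_pZ_sqrt_seq_tail:
  assumes "prime p" "is_padic_sqrt_seq p D r" "m \<le> n"
  shows "in_pZ p (int m) (r n - r m)"
  using assms(3)
proof (induction n rule: dec_induct)
  case base
  then show ?case using in_pZ_zero[OF assms(1)] by simp
next
  case (step n)
  have "in_pZ p (int n) (r (Suc n) - r n)"
    using assms(2) unfolding is_padic_sqrt_seq_def by blast
  then have "in_pZ p (int m) (r (Suc n) - r n)"
    by (rule in_pZ_mono[OF assms(1)]) (use step(1) in simp)
  from in_pZ_add[OF assms(1) this step(3)] show ?case by simp
qed

lemma in_pZ_sqrt_seq:
  assumes "prime p" "is_padic_sqrt_seq p D r"
  shows "in_pZ p 0 (r n)"
proof -
  have "in_pZ p (int n) ((r n)\<^sup>2 - of_int D)"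
    using assms(2) unfolding is_padic_sqrt_seq_def by blast
  then have "in_pZ p 0 ((r n)\<^sup>2 - of_int D)"
    by (rule in_pZ_mono[OF assms(1)]) simp
  from in_pZ_add[OF assms(1) this in_pZ_of_int[OF assms(1), of D]]
  show ?thesis by (intro in_pZ_power2_imp[OF assms(1), of "r n"]) simp
qed

text \<open>A single rational \<open>y\<close> approximates \<open>(P' + sqrt D) / q\<close> to \<open>p\<close>-adic precision \<open>p\<close>.\<close>
lemma padic_cong_rational_approx:
  assumes "prime p" "is_padic_sqrt_seq p D r" "q \<noteq> 0"
  obtains y where "\<And>x j. j \<le> 1 \<Longrightarrow> in_pZ p j (y - x) \<Longrightarrow> padic_cong p r P' (of_int q) x j"
proof -
  obtain v u where vu: "q = int p ^ v * u" "\<not> int p dvd u" "u \<noteq> 0"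
    using int_times_prime_power_factor[OF assms(1,3)] by blast
  define y where "y = (P' + r (Suc v)) / of_int q"
  have close: "in_pZ p 1 ((P' + r n) / of_int q - y)" if "Suc v \<le> n" for n
  proof -
    have "in_pZ p (1 + int v) (r n - r (Suc v))"
      using in_pZ_sqrt_seq_tail[OF assms(1,2) that] by simp
    from in_pZ_divide[OF assms(1) this vu(2,3)]
    show ?thesis
      unfolding y_def vu(1) [symmetric] diff_divide_distrib [symmetric] by simp
  qed
  have "padic_cong p r P' (of_int q) x j" if "j \<le> 1" "in_pZ p j (y - x)" for x j
    unfolding padic_cong_def
  proof (intro exI[of _ "Suc v"] allI impI)
    fix n assume "Suc v \<le> n"
    from in_pZ_add[OF assms(1) in_pZ_mono[OF assms(1) close[OF this] that(1)] that(2)]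
    show "in_pZ p j ((P' + r n) / of_int q - x)" by simp
  qed
  then show ?thesis by (rule that)
qed

lemma padic_cong_obtain_index:
  assumes "padic_cong p r P' Q' x j"
  obtains n where "m \<le> n" "in_pZ p j ((P' + r n) / Q' - x)"
proof -
  obtain n0 where "\<forall>n\<ge>n0. in_pZ p j ((P' + r n) / Q' - x)"
    using assms unfolding padic_cong_def by blast
  then show ?thesis using that[of "max m n0"] by simp
qed

lemma padic_cong_diff:
  assumes "prime p" "padic_cong p r P' Q' x j" "padic_cong p r P' Q' x' j"
  shows "in_pZ p j (x' - x)"
proof -
  obtain n1 where n1: "\<forall>n\<ge>n1. in_pZ p j ((P' + r n) / Q' - x)"
    using assms(2) unfolding padic_cong_def by blast
  obtain n2 where n2: "\<forall>n\<ge>n2. in_pZ p j ((P' + r n) / Q' - x')"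
    using assms(3) unfolding padic_cong_def by blast
  have "in_pZ p j (((P' + r (max n1 n2)) / Q' - x) - ((P' + r (max n1 n2)) / Q' - x'))"
    by (rule in_pZ_diff[OF assms(1)]) (use n1 n2 in auto)
  then show ?thesis by simp
qed

lemma padic_cong_add_Ints:
  assumes "prime p" "padic_cong p r P' Q' x j" "0 \<le> j" "z \<in> \<int>"
  shows "padic_cong p r P' Q' (z + x) 0"
proof -
  obtain n0 where n0: "\<forall>n\<ge>n0. in_pZ p j ((P' + r n) / Q' - x)"
    using assms(2) unfolding padic_cong_def by blast
  obtain k where z: "z = of_int k" using assms(4) by (elim Ints_cases)
  show ?thesis
    unfolding padic_cong_def
  proof (intro exI[of _ n0] allI impI)
    fix n assume "n0 \<le> n"
    then have "in_pZ p 0 ((P' + r n) / Q' - x)"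
      using n0 in_pZ_mono[OF assms(1) _ assms(3)] by blast
    from in_pZ_diff[OF assms(1) this in_pZ_of_int[OF assms(1), of k]]
    show "in_pZ p 0 ((P' + r n) / Q' - (z + x))" by (simp add: z algebra_simps)
  qed
qed

lemma s_fun_spec:
  assumes "prime p" "odd p" "is_padic_sqrt_seq p D r" "q \<noteq> 0"
  shows "dig_upto0 p (s_fun p r P' (of_int q)) \<and> padic_cong p r P' (of_int q) (s_fun p r P' (of_int q)) 1"
proof -
  obtain y where y: "\<And>x j. j \<le> 1 \<Longrightarrow> in_pZ p j (y - x) \<Longrightarrow> padic_cong p r P' (of_int q) x j"
    using padic_cong_rational_approx[OF assms(1,3,4)] by blast
  obtain x where x: "dig_upto0 p x" "in_pZ p 1 (y - x)"
    using dig_upto0_approx[OF assms(1,2)] by blast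
  have cong: "padic_cong p r P' (of_int q) x 1" using y x(2) by simp
  have "x' = x" if "dig_upto0 p x'" "padic_cong p r P' (of_int q) x' 1" for x'
    using dig_upto0_unique[OF assms(1) that(1) x(1) padic_cong_diff[OF assms(1) cong that(2)]] .
  then have "\<exists>!x. dig_upto0 p x \<and> padic_cong p r P' (of_int q) x 1"
    using x(1) cong by blast
  from theI'[OF this] show ?thesis unfolding s_fun_def .
qed

lemma t_fun_spec:
  assumes "prime p" "odd p" "is_padic_sqrt_seq p D r" "q \<noteq> 0"
  shows "dig_below0 p (t_fun p r P' (of_int q)) \<and> padic_cong p r P' (of_int q) (t_fun p r P' (of_int q)) 0"
proof -
  obtain y where y: "\<And>x j. j \<le> 1 \<Longrightarrow> in_pZ p j (y - x) \<Longrightarrow> padic_cong p r P' (of_int q) x j"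
    using padic_cong_rational_approx[OF assms(1,3,4)] by blast
  obtain x where x: "dig_below0 p x" "in_pZ p 0 (y - x)"
    using dig_below0_approx[OF assms(1,2)] by blast
  have cong: "padic_cong p r P' (of_int q) x 0" using y x(2) by simp
  have "x' = x" if "dig_below0 p x'" "padic_cong p r P' (of_int q) x' 0" for x'
    using dig_below0_unique[OF assms(1) that(1) x(1) padic_cong_diff[OF assms(1) cong that(2)]] .
  then have "\<exists>!x. dig_below0 p x \<and> padic_cong p r P' (of_int q) x 0"
    using x(1) cong by blast
  from theI'[OF this] show ?thesis unfolding t_fun_def .
qed

lemma sbar_spec:
  assumes "prime p" "odd p" "is_padic_sqrt_seq p D r" "q \<noteq> 0"
  shows "p_fraction p (sbar p r P' (of_int q)) \<and> padic_cong p r P' (of_int q) (sbar p r P' (of_int q)) 0"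
proof -
  define s where "s = s_fun p r P' (of_int q)"
  define z where "z = (of_int (round ((P' / of_int q - s) / of_nat p)) * of_nat p :: rat)"
  have s: "dig_upto0 p s" "padic_cong p r P' (of_int q) s 1"
    using s_fun_spec[OF assms] unfolding s_def by auto
  have z: "z \<in> \<int>" unfolding z_def by simp
  have "sbar p r P' (of_int q) = z + s"
    unfolding sbar_def s_def z_def Let_def ..
  moreover have "p_fraction p (z + s)"
    using p_fraction_add[OF p_fraction_Ints[OF z] p_fraction_dig_upto0[OF _ s(1)]]
      prime_gt_0_nat[OF assms(1)] by simp
  moreover have "padic_cong p r P' (of_int q) (z + s) 0"
    using padic_cong_add_Ints[OF assms(1) s(2) _ z] by simp
  ultimately show ?thesis by simp
qed

lemma tbar_spec:
  assumes "prime p" "odd p" "is_padic_sqrt_seq p D r" "q \<noteq> 0"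
  shows "p_fraction p (tbar p r P' (of_int q)) \<and> padic_cong p r P' (of_int q) (tbar p r P' (of_int q)) 0"
proof -
  define t where "t = t_fun p r P' (of_int q)"
  define z where "z = (of_int (round (P' / of_int q - t)) :: rat)"
  have t: "dig_below0 p t" "padic_cong p r P' (of_int q) t 0"
    using t_fun_spec[OF assms] unfolding t_def by auto
  have z: "z \<in> \<int>" unfolding z_def by simp
  have "tbar p r P' (of_int q) = z + t"
    unfolding tbar_def t_def z_def Let_def ..
  moreover have "p_fraction p (z + t)"
    using p_fraction_add[OF p_fraction_Ints[OF z] p_fraction_dig_below0[OF _ t(1)]]
      prime_gt_0_nat[OF assms(1)] by simp
  moreover have "padic_cong p r P' (of_int q) (z + t) 0"
    using padic_cong_add_Ints[OF assms(1) t(2) _ z] by simp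
  ultimately show ?thesis by simp
qed

lemma cf_step_numerator_Ints:
  assumes "prime p" "is_padic_sqrt_seq p D r" "Q \<noteq> 0"
    and "p_fraction p \<beta>" "padic_cong p r (of_int P) (of_int Q) \<beta> 0"
  shows "\<beta> * of_int Q \<in> \<int>"
proof -
  obtain n where e: "in_pZ p 0 ((of_int P + r n) / of_int Q - \<beta>)"
    using padic_cong_obtain_index[OF assms(5)] by blast
  have "\<beta> * of_int Q = (of_int P + r n) - ((of_int P + r n) / of_int Q - \<beta>) * of_int Q"
    using assms(3) by (simp add: field_simps)
  moreover have "in_pZ p 0 ((of_int P + r n) - ((of_int P + r n) / of_int Q - \<beta>) * of_int Q)"
    using in_pZ_add[OF assms(1) in_pZ_of_int[OF assms(1)] in_pZ_sqrt_seq[OF assms(1,2)]]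
      in_pZ_mult[OF assms(1) e in_pZ_of_int[OF assms(1)]]
    by (intro in_pZ_diff[OF assms(1)]) simp_all
  moreover have "p_fraction p (\<beta> * of_int Q)"
    using assms(4) by (simp add: p_fraction_mult p_fraction_Ints)
  ultimately show ?thesis
    using p_fraction_in_pZ_imp_Ints[OF assms(1)] by simp
qed

lemma cf_step_denominator_Ints:
  assumes "prime p" "is_padic_sqrt_seq p D r" "Q \<noteq> 0" "Q dvd D - P\<^sup>2"
    and "p_fraction p \<beta>" "padic_cong p r (of_int P) (of_int Q) \<beta> 0"
    and P': "\<beta> * of_int Q - of_int P = of_int P'"
  shows "(of_int D - (of_int P')\<^sup>2) / (of_int Q :: rat) \<in> \<int>"
proof -
  obtain v u where vu: "Q = int p ^ v * u" "\<not> int p dvd u" "u \<noteq> 0"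
    using int_times_prime_power_factor[OF assms(1,3)] by blast
  obtain n where n: "v \<le> n" and e: "in_pZ p 0 ((of_int P + r n) / of_int Q - \<beta>)"
    using padic_cong_obtain_index[OF assms(6)] by blast
  obtain d where d: "D - P\<^sup>2 = Q * d"
    using assms(4) by (elim dvdE)
  have Q0: "(of_int Q :: rat) \<noteq> 0" using assms(3) by simp
  define Q' where "Q' = (of_int D - (of_int P')\<^sup>2) / (of_int Q :: rat)"
  \<comment> \<open>Two expressions for \<open>Q'\<close>: one shows \<open>Q' \<in> \<int>[1/p]\<close>, the other that \<open>Q'\<close> is \<open>p\<close>-integral.\<close>
  have D: "(of_int D :: rat) = (of_int P)\<^sup>2 + of_int Q * of_int d"
    using arg_cong[OF d, of "of_int :: int \<Rightarrow> rat"] by simp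
  have P'_eq: "of_int P' = \<beta> * of_int Q - of_int P"
    using P' by simp
  have Q'_fraction: "Q' = of_int d + \<beta> * (2 * of_int P - \<beta> * of_int Q)"
    unfolding Q'_def P'_eq D using Q0 by (simp add: field_simps power2_eq_square)
  define \<epsilon> where "\<epsilon> = (of_int P + r n) / of_int Q - \<beta>"
  have "r n = of_int P' + \<epsilon> * of_int Q"
    unfolding \<epsilon>_def P'_eq using Q0 by (simp add: field_simps)
  then have Q'_padic: "Q' = (of_int D - (r n)\<^sup>2) / of_int Q + \<epsilon> * (r n + of_int P')"
    unfolding Q'_def using Q0 by (simp add: field_simps power2_eq_square)
  have "p_fraction p Q'"
    unfolding Q'_fraction using assms(5)
    by (simp add: p_fraction_add p_fraction_mult p_fraction_diff p_fraction_Ints)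
  moreover have "in_pZ p 0 Q'"
  proof -
    have "in_pZ p (int n) (- ((r n)\<^sup>2 - of_int D))"
      using assms(2) in_pZ_uminus unfolding is_padic_sqrt_seq_def by blast
    moreover have "int (n - v) + int v = int n"
      using n by simp
    ultimately have "in_pZ p (int (n - v) + int v) (of_int D - (r n)\<^sup>2)"
      by simp
    from in_pZ_divide[OF assms(1) this vu(2,3)]
    have "in_pZ p 0 ((of_int D - (r n)\<^sup>2) / of_int Q)"
      unfolding vu(1) [symmetric] by (rule in_pZ_mono[OF assms(1)]) simp
    moreover have "in_pZ p 0 (\<epsilon> * (r n + of_int P'))"
      using in_pZ_mult[OF assms(1) e[folded \<epsilon>_def]
          in_pZ_add[OF assms(1) in_pZ_sqrt_seq[OF assms(1,2)] in_pZ_of_int[OF assms(1)]]]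
      by simp
    ultimately show ?thesis
      unfolding Q'_padic by (rule in_pZ_add[OF assms(1)])
  qed
  ultimately show ?thesis
    unfolding Q'_def by (rule p_fraction_in_pZ_imp_Ints[OF assms(1), rotated])
qed

lemma cf_step_integral:
  assumes "prime p" "is_padic_sqrt_seq p D r" "\<not> (\<exists>k::int. D = k\<^sup>2)" "Q \<noteq> 0" "Q dvd D - P\<^sup>2"
    and "p_fraction p \<beta>" "padic_cong p r (of_int P) (of_int Q) \<beta> 0"
  obtains P' Q' :: int
  where "\<beta> * of_int Q - of_int P = of_int P'" "(of_int D - (of_int P')\<^sup>2) / of_int Q = (of_int Q' :: rat)"
    "Q' \<noteq> 0" "Q' dvd D - P'\<^sup>2"
proof -
  have "\<beta> * of_int Q - of_int P \<in> \<int>"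
    using cf_step_numerator_Ints[OF assms(1,2,4,6,7)] by simp
  then obtain P' where P': "\<beta> * of_int Q - of_int P = of_int P'"
    by (elim Ints_cases)
  obtain Q' where Q': "(of_int D - (of_int P')\<^sup>2) / of_int Q = (of_int Q' :: rat)"
    using cf_step_denominator_Ints[OF assms(1,2,4,5,6,7) P'] by (elim Ints_cases)
  then have "(of_int (D - P'\<^sup>2) :: rat) = of_int (Q * Q')"
    using assms(4) by (simp add: field_simps)
  then have DQ: "D - P'\<^sup>2 = Q * Q'"
    by (simp only: of_int_eq_iff)
  then have "Q' \<noteq> 0"
    using assms(3) by auto
  moreover have "Q' dvd D - P'\<^sup>2"
    unfolding DQ by simp
  ultimately show ?thesis
    using P' Q' by (rule that[rotated 2])
qed

lemma cf_sequence_integral: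
  assumes "prime p" "odd p" "is_padic_sqrt_seq p D r" "\<not> (\<exists>k::int. D = k\<^sup>2)"
    and "Q \<noteq> 0" "Q dvd D - P\<^sup>2" "Pn 0 = of_int P" "Qn 0 = of_int Q"
    and "\<And>n. b n = sbar p r (Pn n) (Qn n) \<or> b n = tbar p r (Pn n) (Qn n)"
    and "\<And>n. Pn (Suc n) = b n * Qn n - Pn n"
    and "\<And>n. Qn (Suc n) = (of_int D - (Pn (Suc n))\<^sup>2) / Qn n"
  shows "\<exists>P' Q'. Pn n = of_int P' \<and> Qn n = of_int Q' \<and> Q' \<noteq> 0 \<and> Q' dvd D - P'\<^sup>2"
proof (induction n)
  case 0
  show ?case using assms(5-8) by blast
next
  case (Suc n)
  then obtain P' Q' where I: "Pn n = of_int P'" "Qn n = of_int Q'" "Q' \<noteq> 0" "Q' dvd D - P'\<^sup>2"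
    by blast
  have "p_fraction p (b n) \<and> padic_cong p r (of_int P') (of_int Q') (b n) 0"
    using assms(9)[of n] sbar_spec[OF assms(1-3) I(3)] tbar_spec[OF assms(1-3) I(3)] I(1,2)
    by auto
  then obtain P'' Q'' where "b n * of_int Q' - of_int P' = of_int P''"
    "(of_int D - (of_int P'')\<^sup>2) / of_int Q' = (of_int Q'' :: rat)" "Q'' \<noteq> 0" "Q'' dvd D - P''\<^sup>2"
    using cf_step_integral[OF assms(1,3,4) I(3,4)] by blast
  then show ?case
    using assms(10,11)[of n] I(1,2) by auto
qed

section \<open>Size of the denominators\<close>

lemma sbar_close:
  assumes "0 < p"
  shows "\<bar>sbar p r P' Q' - P' / Q'\<bar> \<le> of_nat p / 2"
proof -
  define z where "z = (P' / Q' - s_fun p r P' Q') / of_nat p"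
  have "sbar p r P' Q' - P' / Q' = of_nat p * (of_int (round z) - z)"
    unfolding sbar_def Let_def z_def using assms by (simp add: field_simps)
  then have "\<bar>sbar p r P' Q' - P' / Q'\<bar> = of_nat p * \<bar>of_int (round z) - z\<bar>"
    by (simp add: abs_mult)
  also have "\<dots> \<le> of_nat p * (1 / 2)"
    by (rule mult_left_mono) (use of_int_round_abs_le[of z] in auto)
  finally show ?thesis by simp
qed

lemma tbar_close: "\<bar>tbar p r P' Q' - P' / Q'\<bar> \<le> 1 / 2"
proof -
  define z where "z = P' / Q' - t_fun p r P' Q'"
  have "tbar p r P' Q' - P' / Q' = of_int (round z) - z"
    unfolding tbar_def Let_def z_def by simp
  then show ?thesis using of_int_round_abs_le[of z] by simp
qed

lemma odd_Suc_le_two_power_ceiling_log: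
  assumes "odd p" "1 < p"
  shows "p + 1 \<le> 2 ^ nat \<lceil>log 2 (real p)\<rceil>"
proof -
  define N where "N = nat \<lceil>log 2 (real p)\<rceil>"
  have "real p = 2 powr log 2 (real p)"
    using assms(2) by simp
  also have "\<dots> \<le> 2 powr real N"
    unfolding N_def using assms(2) by (intro powr_mono) (auto simp: le_nat_iff)
  finally have "p \<le> 2 ^ N"
    by (simp add: powr_realpow flip: of_nat_le_iff)
  moreover have "p \<noteq> 2 ^ N"
    using assms by (cases N) auto
  ultimately show ?thesis
    unfolding N_def by simp
qed

lemma cf_denominator_step_bound:
  fixes \<beta> P Q c D :: "'a::linordered_field"
  assumes "\<bar>\<beta> - P / Q\<bar> \<le> c" "Q \<noteq> 0"
  shows "\<bar>(D - (\<beta> * Q - P)\<^sup>2) / Q\<bar> \<le> \<bar>D\<bar> / \<bar>Q\<bar> + c\<^sup>2 * \<bar>Q\<bar>"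
proof -
  have "\<bar>\<beta> * Q - P\<bar> = \<bar>\<beta> - P / Q\<bar> * \<bar>Q\<bar>"
    using assms(2) by (simp flip: abs_mult add: field_simps)
  also have "\<dots> \<le> c * \<bar>Q\<bar>"
    using assms(1) by (rule mult_right_mono) simp
  finally have "\<bar>\<beta> * Q - P\<bar>\<^sup>2 \<le> (c * \<bar>Q\<bar>)\<^sup>2"
    by (rule power_mono) simp
  then have "(\<beta> * Q - P)\<^sup>2 \<le> c\<^sup>2 * \<bar>Q\<bar>\<^sup>2"
    by (simp add: power_mult_distrib)
  moreover have "\<bar>D - (\<beta> * Q - P)\<^sup>2\<bar> \<le> \<bar>D\<bar> + (\<beta> * Q - P)\<^sup>2"
    using abs_triangle_ineq4[of D "(\<beta> * Q - P)\<^sup>2"] by simp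
  ultimately have "\<bar>D - (\<beta> * Q - P)\<^sup>2\<bar> \<le> \<bar>D\<bar> + c\<^sup>2 * \<bar>Q\<bar>\<^sup>2"
    by linarith
  then have "\<bar>D - (\<beta> * Q - P)\<^sup>2\<bar> / \<bar>Q\<bar> \<le> (\<bar>D\<bar> + c\<^sup>2 * \<bar>Q\<bar>\<^sup>2) / \<bar>Q\<bar>"
    by (rule divide_right_mono) simp
  also have "(\<bar>D\<bar> + c\<^sup>2 * \<bar>Q\<bar>\<^sup>2) / \<bar>Q\<bar> = \<bar>D\<bar> / \<bar>Q\<bar> + c\<^sup>2 * \<bar>Q\<bar>"
    using assms(2) by (simp add: field_simps power2_eq_square)
  finally show ?thesis
    by (simp add: abs_divide)
qed

lemma cf_denominator_step_le:
  assumes "0 < p" "\<beta> = (if c then sbar p r P' Q' else tbar p r P' Q')" "Q' \<noteq> 0"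
  shows "\<bar>(of_int D - (\<beta> * Q' - P')\<^sup>2) / Q'\<bar>
    \<le> of_int \<bar>D\<bar> / \<bar>Q'\<bar> + (if c then (of_nat p)\<^sup>2 / 4 else 1 / 4) * \<bar>Q'\<bar>"
proof -
  have "\<bar>\<beta> - P' / Q'\<bar> \<le> (if c then of_nat p / 2 else 1 / 2)"
    using assms(2) sbar_close[OF assms(1)] tbar_close by simp
  from cf_denominator_step_bound[OF this assms(3), of "of_int D"]
  show ?thesis by (cases c) (simp_all add: power_divide)
qed

text \<open>Convexity of \<open>\<lambda>x. d / x + c * x\<close>: its maximum on \<open>[1, X]\<close> is attained at an endpoint.\<close>
lemma divide_plus_linear_le_max:
  fixes x X d c :: "'a::linordered_field"
  assumes "1 \<le> x" "x \<le> X" "0 \<le> d" "0 \<le> c"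
  shows "d / x + c * x \<le> max (d + c) (d / X + c * X)"
proof -
  have x0: "x > 0" and X0: "X > 0" using assms by auto
  have "X \<le> x * (1 + X - x)"
    using mult_nonneg_nonneg[of "x - 1" "X - x"] assms by (simp add: algebra_simps)
  then have "1 / x \<le> (1 + X - x) / X"
    using x0 X0 by (simp add: field_simps)
  then have "d * (1 / x) \<le> d * ((1 + X - x) / X)"
    using assms(3) by (rule mult_left_mono)
  then have "d / x \<le> d * (1 + X - x) / X"
    by simp
  moreover have "c * x + d * (1 + X - x) / X = (d + c) + (x - 1) * (c - d / X)"
    and "d / X + c * X = (d + c) + (X - 1) * (c - d / X)"
    using X0 by (simp_all add: field_simps)
  moreover have "(x - 1) * (c - d / X) \<le> max 0 ((X - 1) * (c - d / X))"
  proof (cases "0 \<le> c - d / X")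
    case True
    then have "(x - 1) * (c - d / X) \<le> (X - 1) * (c - d / X)"
      using assms by (intro mult_right_mono) auto
    then show ?thesis by simp
  next
    case False
    then have "(x - 1) * (c - d / X) \<le> 0"
      using assms by (intro mult_nonneg_nonpos) auto
    then show ?thesis by simp
  qed
  ultimately show ?thesis
    by (simp add: max_def split: if_splits)
qed

locale periodic_recurrence =
  fixes x :: "nat \<Rightarrow> 'a::linordered_field" and q d M :: 'a and N :: nat
  assumes q_ge_3: "3 \<le> q" and two_power_N: "q + 1 \<le> 2 ^ N"
    and d_nonneg: "0 \<le> d"
    and M_ge: "x 0 \<le> M" "q\<^sup>2 / 4 * d + 1 \<le> M" "4 * (q\<^sup>2 + 1) / 3 \<le> M"
    and x_ge_1: "\<And>n. 1 \<le> x n"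
    and x_Suc_le: "\<And>n. x (Suc n) \<le> d / x n + (if N dvd n then q\<^sup>2 / 4 else 1 / 4) * x n"
begin

lemma q_sq_ge_9: "9 \<le> q\<^sup>2"
  using power_mono[OF q_ge_3, of 2] by simp

lemma M_ge_d: "9 / 4 * d + 1 \<le> M"
  using M_ge(2) mult_right_mono[OF q_sq_ge_9 d_nonneg] by simp

lemma M_ge_1: "1 \<le> M"
  using M_ge_d d_nonneg by simp

lemma d_div_M_le: "d / M \<le> 4 / 9"
  using M_ge_d M_ge_1 by (simp add: field_simps)

lemma N_ge_2: "2 \<le> N"
proof (rule ccontr)
  assume "\<not> 2 \<le> N"
  then have "(2::'a) ^ N \<le> 2 ^ 1"
    by (intro power_increasing) auto
  then show False
    using two_power_N q_ge_3 by simp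
qed

lemma step_at_period_start:
  assumes "x n \<le> M" "N dvd n"
  shows "x (Suc n) \<le> q\<^sup>2 / 4 * M + d / M"
proof -
  have "x (Suc n) \<le> d / x n + q\<^sup>2 / 4 * x n"
    using x_Suc_le[of n] assms(2) by simp
  also have "\<dots> \<le> max (d + q\<^sup>2 / 4) (d / M + q\<^sup>2 / 4 * M)"
    using x_ge_1 assms(1) d_nonneg by (intro divide_plus_linear_le_max) auto
  also have "\<dots> \<le> q\<^sup>2 / 4 * M + d / M"
  proof -
    have "q\<^sup>2 / 4 * (q\<^sup>2 / 4 * d + 1) \<le> q\<^sup>2 / 4 * M"
      using M_ge(2) by (intro mult_left_mono) auto
    moreover have "q\<^sup>2 / 4 * (q\<^sup>2 / 4 * d + 1) = q\<^sup>2 / 4 * (q\<^sup>2 / 4) * d + q\<^sup>2 / 4"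
      by (simp add: algebra_simps)
    moreover have "1 \<le> q\<^sup>2 / 4 * (q\<^sup>2 / 4)"
      using mult_mono[OF q_sq_ge_9 q_sq_ge_9] by simp
    then have "1 * d \<le> q\<^sup>2 / 4 * (q\<^sup>2 / 4) * d"
      using d_nonneg by (rule mult_right_mono)
    moreover have "0 \<le> d / M"
      using d_nonneg M_ge_1 by simp
    ultimately have "d + q\<^sup>2 / 4 \<le> q\<^sup>2 / 4 * M + d / M"
      by linarith
    then show ?thesis by simp
  qed
  finally show ?thesis .
qed

lemma step_in_period_below:
  assumes "x n \<le> M" "\<not> N dvd n"
  shows "x (Suc n) \<le> M"
proof -
  have "x (Suc n) \<le> d / x n + 1 / 4 * x n"
    using x_Suc_le[of n] assms(2) by simp
  also have "\<dots> \<le> max (d + 1 / 4) (d / M + 1 / 4 * M)"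
    using x_ge_1 assms(1) d_nonneg by (intro divide_plus_linear_le_max) auto
  also have "\<dots> \<le> M"
    using M_ge_d d_div_M_le M_ge_1 by simp
  finally show ?thesis .
qed

lemma step_in_period_above:
  assumes "M \<le> x n" "\<not> N dvd n"
  shows "x (Suc n) \<le> d / M + x n / 4"
proof -
  have "d / x n \<le> d / M"
    using assms(1) M_ge_1 d_nonneg by (intro divide_left_mono) auto
  then show ?thesis
    using x_Suc_le[of n] assms(2) by simp
qed

lemma period_contracts: "q\<^sup>2 * M / 4 ^ N + 4 / 3 * (d / M) \<le> M"
proof -
  have "(q + 1)\<^sup>2 \<le> (2 ^ N)\<^sup>2"
    using two_power_N q_ge_3 by (intro power_mono) auto
  also have "(2 ^ N)\<^sup>2 = (4::'a) ^ N"
    by (simp add: power2_eq_square flip: power_mult_distrib)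
  finally have four_power: "(q + 1)\<^sup>2 \<le> 4 ^ N" .
  have "(q + 1)\<^sup>2 \<le> 2 * (q\<^sup>2 + 1)"
    using zero_le_power2[of "q - 1"] by (simp add: power2_eq_square algebra_simps)
  also have "\<dots> = (q\<^sup>2 + 1) * 2"
    by simp
  also have "\<dots> \<le> (q\<^sup>2 + 1) * (4 * (2 * q + 1) / 3)"
    using q_ge_3 by (intro mult_left_mono) auto
  also have "\<dots> = 4 * (q\<^sup>2 + 1) / 3 * (2 * q + 1)"
    by (simp add: algebra_simps)
  also have "\<dots> \<le> M * (2 * q + 1)"
    using M_ge(3) q_ge_3 by (intro mult_right_mono) auto
  finally have "q\<^sup>2 * M \<le> (M - 1) * (q + 1)\<^sup>2"
    by (simp add: power2_eq_square algebra_simps)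
  also have "\<dots> \<le> (M - 1) * 4 ^ N"
    using M_ge_1 by (intro mult_left_mono[OF four_power]) simp
  finally have "q\<^sup>2 * M / 4 ^ N \<le> M - 1"
    by (simp add: pos_divide_le_eq)
  then show ?thesis
    using d_div_M_le by simp
qed

lemma period_invariant:
  "x n \<le> M \<or> (0 < n mod N \<and> x n \<le> q\<^sup>2 * M / 4 ^ (n mod N) + 4 / 3 * (d / M))"
proof (induction n)
  case 0
  then show ?case using M_ge(1) by simp
next
  case (Suc n)
  have mod_Suc: "Suc n mod N = (if Suc (n mod N) = N then 0 else Suc (n mod N))"
    by (rule mod_Suc)
  show ?case
  proof (cases "N dvd n")
    case True
    then have "Suc n mod N = 1"
      using mod_Suc N_ge_2 by auto
    moreover have "x n \<le> M"
      using Suc.IH True by auto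
    moreover have "d / M \<le> 4 / 3 * (d / M)"
    proof -
      have "0 \<le> d / M" using d_nonneg M_ge_1 by simp
      then show ?thesis by linarith
    qed
    ultimately show ?thesis
      using step_at_period_start[OF _ True] by simp
  next
    case False
    show ?thesis
    proof (cases "x n \<le> M")
      case True
      then show ?thesis using step_in_period_below False by simp
    next
      case above: False
      then have "x n \<le> q\<^sup>2 * M / 4 ^ (n mod N) + 4 / 3 * (d / M)"
        using Suc.IH by simp
      then have "d / M + x n / 4 \<le> d / M + (q\<^sup>2 * M / 4 ^ (n mod N) + 4 / 3 * (d / M)) / 4"
        by simp
      also have "\<dots> = q\<^sup>2 * M / 4 ^ Suc (n mod N) + 4 / 3 * (d / M)"
        by (simp add: field_simps)
      finally have bound: "x (Suc n) \<le> q\<^sup>2 * M / 4 ^ Suc (n mod N) + 4 / 3 * (d / M)"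
        using step_in_period_above[OF _ False] above by simp
      show ?thesis
      proof (cases "Suc (n mod N) = N")
        case True
        then show ?thesis
          using bound period_contracts unfolding True by simp
      next
        case False
        then show ?thesis
          using bound mod_Suc by simp
      qed
    qed
  qed
qed

lemma bound: "x n \<le> q\<^sup>2 / 4 * M + 1"
  using period_invariant[of n]
proof
  assume "x n \<le> M"
  moreover have "M \<le> q\<^sup>2 / 4 * M"
    using q_sq_ge_9 M_ge_1 mult_right_mono[of 1 "q\<^sup>2 / 4" M] by simp
  ultimately show ?thesis by linarith
next
  assume "0 < n mod N \<and> x n \<le> q\<^sup>2 * M / 4 ^ (n mod N) + 4 / 3 * (d / M)"
  then have j: "0 < n mod N" and x: "x n \<le> q\<^sup>2 * M / 4 ^ (n mod N) + 4 / 3 * (d / M)"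
    by auto
  have "(4::'a) ^ 1 \<le> 4 ^ (n mod N)"
    using j by (intro power_increasing) auto
  then have "q\<^sup>2 * M / 4 ^ (n mod N) \<le> q\<^sup>2 * M / 4 ^ 1"
    using M_ge_1 by (intro divide_left_mono) auto
  moreover have "4 / 3 * (d / M) \<le> 1"
    using d_div_M_le by simp
  ultimately show ?thesis
    using x by simp
qed

end

theorem lemma6:
  fixes p :: nat and P Q D :: int and r :: "nat \<Rightarrow> rat"
    and Pn Qn b :: "nat \<Rightarrow> rat" and N :: nat
  assumes "prime p" and "p \<ge> 5"
    and "Q \<noteq> 0"
    and "\<not> (\<exists>k::int. D = k^2)"
    and "is_padic_sqrt_seq p D r"
    and "Q dvd D - P^2"
    and "N = nat \<lceil>log 2 (real p)\<rceil>"
    and "Pn 0 = of_int P" and "Qn 0 = of_int Q"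
    and "\<And>n. b n = (if N dvd n then sbar p r (Pn n) (Qn n) else tbar p r (Pn n) (Qn n))"
    and "\<And>n. Pn (Suc n) = b n * Qn n - Pn n"
    and "\<And>n. Qn (Suc n) = (of_int D - (Pn (Suc n))^2) / Qn n"
    and "\<And>n. b n \<noteq> 0"
  shows "\<forall>n. \<bar>Qn n\<bar> \<le> (of_nat p)^2 / 4 *
            max (of_int \<bar>Q\<bar>) (max ((of_nat p)^2 / 4 * of_int \<bar>D\<bar> + 1)
                                  (4 * ((of_nat p)^2 + 1) / 3)) + 1"
proof -
  have odd: "odd p" and p: "1 < p"
    using assms(1,2) prime_odd_nat prime_gt_1_nat by auto
  have "b n = sbar p r (Pn n) (Qn n) \<or> b n = tbar p r (Pn n) (Qn n)" for n
    using assms(10)[of n] by simp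
  note integral = cf_sequence_integral[OF assms(1) odd assms(5,4,3,6,8,9) this assms(11,12)]
  have Qn_ge_1: "1 \<le> \<bar>Qn n\<bar>" for n
    using integral[of n] by (auto simp flip: of_int_abs)
  have Qn_Suc_le: "\<bar>Qn (Suc n)\<bar>
      \<le> of_int \<bar>D\<bar> / \<bar>Qn n\<bar> + (if N dvd n then (of_nat p)\<^sup>2 / 4 else 1 / 4) * \<bar>Qn n\<bar>" for n
    using cf_denominator_step_le[of p "b n", OF _ assms(10)] Qn_ge_1[of n] assms(11,12)[of n] p
    by fastforce
  have "p + 1 \<le> 2 ^ N"
    using odd_Suc_le_two_power_ceiling_log[OF odd p] assms(7) by simp
  then have two_power_N: "of_nat p + 1 \<le> (2::rat) ^ N"
    using of_nat_le_iff[of "p + 1" "2 ^ N", where 'a = rat] by simp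
  have p_ge_3: "3 \<le> (of_nat p :: rat)"
    using assms(2) by simp
  define M :: rat where "M = max (of_int \<bar>Q\<bar>)
    (max ((of_nat p)\<^sup>2 / 4 * of_int \<bar>D\<bar> + 1) (4 * ((of_nat p)\<^sup>2 + 1) / 3))"
  have M_ge: "\<bar>Qn 0\<bar> \<le> M" "(of_nat p)\<^sup>2 / 4 * of_int \<bar>D\<bar> + 1 \<le> M"
    "4 * ((of_nat p)\<^sup>2 + 1) / 3 \<le> M"
    unfolding M_def assms(9) by (simp, (rule max.coboundedI2, rule max.cobounded1),
      (rule max.coboundedI2, rule max.cobounded2))
  have "periodic_recurrence (\<lambda>n. \<bar>Qn n\<bar>) (of_nat p) (of_int \<bar>D\<bar>) M N"
    using p_ge_3 two_power_N M_ge Qn_ge_1 Qn_Suc_le by unfold_locales simp_all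
  then have "\<bar>Qn n\<bar> \<le> (of_nat p)\<^sup>2 / 4 * M + 1" for n
    by (rule periodic_recurrence.bound)
  then show ?thesis
    unfolding M_def by blast
qed

end
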